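(* For every $n\ge0$ and every $c\in\mathbb{Q}$, $R_z\phi_n^{(c)}=\frac{1}{n!}\mathrm{ad}(\theta^{(c)})^n(R_z)$.
   Context: Let $\mathfrak{H}=\mathbb{Q}\langle x,y\rangle$, $z=x+y$. Products of operators denote composition, $[A,B]=AB-BA$, $\mathrm{ad}(A)(B)=[A,B]$; $R_w(w')=w'w$. $H$ is the $\mathbb{Q}$-linear map with $H(w)=\deg(w)w$ for words $w$. $\partial_1$ is the derivation with $\partial_1(x)=xy$, $\partial_1(y)=-xy$. For $c\in\mathbb{Q}$, $\theta^{(c)}$ is the unique $\mathbb{Q}$-linear map with $\theta^{(c)}(x)=\frac12(xz+zx)$, $\theta^{(c)}(y)=\frac12(yz+zy)$ and $\theta^{(c)}(ww')=\theta^{(c)}(w)w'+w\theta^{(c)}(w')+c\,\partial_1(w)H(w')$. The operators $\phi_n^{(c)}$ are defined by $\phi_0^{(c)}=\mathrm{id}$ and $\phi_n^{(c)}=\frac1n\bigl([\theta^{(c)},\phi_{n-1}^{(c)}]+\frac12(R_z\phi_{n-1}^{(c)}+\phi_{n-1}^{(c)}R_z)+c\,\partial_1\phi_{n-1}^{(c)}\bigr)$ for $n\ge1$. *)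

theory Defs
  imports Complex_Main "HOL-Library.Poly_Mapping"
begin

text \<open>The free associative algebra Q<x,y>: finitely supported functions from words
  over the alphabet {x,y} to the rationals.\<close>

datatype letter = X | Y

type_synonym word = "letter list"
type_synonym ncpoly = "word \<Rightarrow>\<^sub>0 rat"

definition wd :: "word \<Rightarrow> ncpoly" where
  "wd w = Poly_Mapping.single w 1"

definition smult :: "rat \<Rightarrow> ncpoly \<Rightarrow> ncpoly" where
  "smult r p = Poly_Mapping.map (\<lambda>a. r * a) p"

definition ncmult :: "ncpoly \<Rightarrow> ncpoly \<Rightarrow> ncpoly" where
  "ncmult p q = (\<Sum>u\<in>Poly_Mapping.keys p. \<Sum>v\<in>Poly_Mapping.keys q.
       Poly_Mapping.single (u @ v) (Poly_Mapping.lookup p u * Poly_Mapping.lookup q v))"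

definition linext :: "(word \<Rightarrow> ncpoly) \<Rightarrow> ncpoly \<Rightarrow> ncpoly" where
  "linext f p = (\<Sum>w\<in>Poly_Mapping.keys p. smult (Poly_Mapping.lookup p w) (f w))"

definition zz :: ncpoly where
  "zz = wd [X] + wd [Y]"

definition Rz :: "ncpoly \<Rightarrow> ncpoly" where
  "Rz p = ncmult p zz"

definition Hop :: "ncpoly \<Rightarrow> ncpoly" where
  "Hop = linext (\<lambda>w. smult (of_nat (length w)) (wd w))"

text \<open>The derivation \<partial>_1 with \<partial>_1(x) = xy, \<partial>_1(y) = -xy,
  determined on words by the Leibniz rule \<partial>_1(a w) = \<partial>_1(a) w + a \<partial>_1(w).\<close>
fun d1_letter :: "letter \<Rightarrow> ncpoly" where
  "d1_letter X = wd [X, Y]"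
| "d1_letter Y = - wd [X, Y]"

fun d1_word :: "word \<Rightarrow> ncpoly" where
  "d1_word [] = 0"
| "d1_word (a # w) = ncmult (d1_letter a) (wd w) + ncmult (wd [a]) (d1_word w)"

definition d1 :: "ncpoly \<Rightarrow> ncpoly" where
  "d1 = linext d1_word"

text \<open>theta^(c): theta(a) = (a z + z a)/2 for letters a, and
  theta(w w') = theta(w) w' + w theta(w') + c \<partial>_1(w) H(w'); on words it is determined
  by splitting off the first letter (and theta(1) = 0, forced by the rule with w = w' = 1).\<close>
definition theta_letter :: "letter \<Rightarrow> ncpoly" where
  "theta_letter a = smult (1/2) (ncmult (wd [a]) zz + ncmult zz (wd [a]))"

fun theta_word :: "rat \<Rightarrow> word \<Rightarrow> ncpoly" where
  "theta_word c [] = 0"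
| "theta_word c (a # w) = ncmult (theta_letter a) (wd w) + ncmult (wd [a]) (theta_word c w)
      + smult c (ncmult (d1_letter a) (Hop (wd w)))"

definition theta :: "rat \<Rightarrow> ncpoly \<Rightarrow> ncpoly" where
  "theta c = linext (theta_word c)"

definition comm :: "(ncpoly \<Rightarrow> ncpoly) \<Rightarrow> (ncpoly \<Rightarrow> ncpoly) \<Rightarrow> ncpoly \<Rightarrow> ncpoly" where
  "comm A B = (\<lambda>p. A (B p) - B (A p))"

definition ad :: "(ncpoly \<Rightarrow> ncpoly) \<Rightarrow> (ncpoly \<Rightarrow> ncpoly) \<Rightarrow> ncpoly \<Rightarrow> ncpoly" where
  "ad A = comm A"

primrec phi :: "rat \<Rightarrow> nat \<Rightarrow> ncpoly \<Rightarrow> ncpoly" where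
  "phi c 0 = id"
| "phi c (Suc n) = (\<lambda>p. smult (1 / of_nat (Suc n))
      (comm (theta c) (phi c n) p
       + smult (1/2) (Rz (phi c n p) + phi c n (Rz p))
       + smult c (d1 (phi c n p))))"

end

theory Submission imports Defs begin

(* Write D_k = ad(theta)^k(d1) for the iterated commutators of theta with the
   derivation d1.  The theorem is equivalent to  ad(theta)^n(R_z) = n! R_z phi_n, and by
   induction on n this reduces (using theta(p z) = theta(p) z + p z z + c d1(p) z) to the
   single commutation relation  phi_n R_z = R_z phi_n.  That relation is proved together with
   three companion facts by one simultaneous induction on a "level" N:
     (1) D_N satisfies a twisted right-multiplication rule
           D_N(p a) = D_N(p) a + sgn(a) N! phi_N(p x) y       for letters a;
     (2) phi_N commutes with R_z;
     (3) D_j commutes with phi_m whenever j + m = N;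
     (4) D_N commutes with d1. *)


section \<open>Scalar multiplication and linear operators\<close>

lemma lookup_smult [simp]: "Poly_Mapping.lookup (smult r p) k = r * Poly_Mapping.lookup p k"
  unfolding smult_def by (simp add: Poly_Mapping.map.rep_eq when_def)

lemma smult_add: "smult r (p + q) = smult r p + smult r q"
  by (rule poly_mapping_eqI) (simp add: lookup_add algebra_simps)

lemma smult_add_left: "smult (r + s) p = smult r p + smult s p"
  by (rule poly_mapping_eqI) (simp add: lookup_add algebra_simps)

lemma smult_smult [simp]: "smult r (smult s p) = smult (r * s) p"
  by (rule poly_mapping_eqI) simp

lemma smult_one [simp]: "smult 1 p = p"
  by (rule poly_mapping_eqI) simp

lemma smult_zero_left [simp]: "smult 0 p = 0"
  by (rule poly_mapping_eqI) simp

lemma smult_zero_right [simp]: "smult r 0 = 0"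
  by (rule poly_mapping_eqI) simp

lemma smult_minus: "smult r (- p) = - smult r p"
  by (rule poly_mapping_eqI) simp

lemma smult_diff: "smult r (p - q) = smult r p - smult r q"
  by (rule poly_mapping_eqI) (simp add: lookup_minus algebra_simps)

lemma smult_single: "smult r (Poly_Mapping.single k v) = Poly_Mapping.single k (r * v)"
  by (rule poly_mapping_eqI) (simp add: lookup_single when_def)

definition linear_op :: "(ncpoly \<Rightarrow> ncpoly) \<Rightarrow> bool" where
  "linear_op A \<longleftrightarrow> (\<forall>p q. A (p + q) = A p + A q) \<and> (\<forall>r p. A (smult r p) = smult r (A p))"

lemma linear_opI:
  "(\<And>p q. A (p + q) = A p + A q) \<Longrightarrow> (\<And>r p. A (smult r p) = smult r (A p)) \<Longrightarrow> linear_op A"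
  unfolding linear_op_def by blast

lemma linear_op_add: "linear_op A \<Longrightarrow> A (p + q) = A p + A q"
  unfolding linear_op_def by blast

lemma linear_op_smult: "linear_op A \<Longrightarrow> A (smult r p) = smult r (A p)"
  unfolding linear_op_def by blast

lemma linear_op_zero: "linear_op A \<Longrightarrow> A 0 = 0"
  using linear_op_smult[of A 0 0] by simp

lemma linear_op_minus: "linear_op A \<Longrightarrow> A (- p) = - A p"
proof -
  assume A: "linear_op A"
  have neg: "- q = smult (-1) q" for q :: ncpoly
    by (rule poly_mapping_eqI) simp
  show ?thesis using linear_op_smult[OF A, of "-1" p] by (simp only: neg)
qed

lemma linear_op_diff: "linear_op A \<Longrightarrow> A (p - q) = A p - A q"
  using linear_op_add[of A p "- q"] linear_op_minus[of A q] by simp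

lemma linear_op_sum: "linear_op A \<Longrightarrow> A (sum f S) = (\<Sum>x\<in>S. A (f x))"
  by (induction S rule: infinite_finite_induct) (auto simp: linear_op_zero linear_op_add)

lemma smult_sum: "smult r (sum f S) = (\<Sum>x\<in>S. smult r (f x))"
  by (rule linear_op_sum) (rule linear_opI, simp_all add: smult_add mult.commute)

lemma linear_op_ident: "linear_op (\<lambda>p. p)"
  by (rule linear_opI) simp_all

lemma linear_op_compose:
  assumes "linear_op A" "linear_op B" shows "linear_op (\<lambda>p. A (B p))"
  by (rule linear_opI) (simp_all add: linear_op_add[OF assms(1)] linear_op_add[OF assms(2)]
      linear_op_smult[OF assms(1)] linear_op_smult[OF assms(2)])

lemma linear_op_plus:
  assumes "linear_op A" "linear_op B" shows "linear_op (\<lambda>p. A p + B p)"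
  by (rule linear_opI) (simp_all add: linear_op_add[OF assms(1)] linear_op_add[OF assms(2)]
      linear_op_smult[OF assms(1)] linear_op_smult[OF assms(2)] smult_add)

lemma linear_op_minus_op:
  assumes "linear_op A" "linear_op B" shows "linear_op (\<lambda>p. A p - B p)"
  by (rule linear_opI) (simp_all add: linear_op_add[OF assms(1)] linear_op_add[OF assms(2)]
      linear_op_smult[OF assms(1)] linear_op_smult[OF assms(2)] smult_diff)

lemma linear_op_scale:
  assumes "linear_op A" shows "linear_op (\<lambda>p. smult r (A p))"
  by (rule linear_opI) (simp_all add: linear_op_add[OF assms] linear_op_smult[OF assms]
      smult_add mult.commute)

lemma linear_op_comm: "linear_op A \<Longrightarrow> linear_op B \<Longrightarrow> linear_op (comm A B)"
  unfolding comm_def by (rule linear_op_minus_op; rule linear_op_compose)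


lemma poly_expansion: "p = (\<Sum>w\<in>Poly_Mapping.keys p. smult (Poly_Mapping.lookup p w) (wd w))"
proof (rule poly_mapping_eqI)
  fix k
  have "Poly_Mapping.lookup (\<Sum>w\<in>Poly_Mapping.keys p. smult (Poly_Mapping.lookup p w) (wd w)) k
     = (\<Sum>w\<in>Poly_Mapping.keys p. (if w = k then Poly_Mapping.lookup p w else 0))"
    unfolding lookup_sum by (rule sum.cong) (auto simp: wd_def lookup_single when_def)
  also have "\<dots> = Poly_Mapping.lookup p k"
    by (simp add: sum.delta in_keys_iff)
  finally show "Poly_Mapping.lookup p k
      = Poly_Mapping.lookup (\<Sum>w\<in>Poly_Mapping.keys p. smult (Poly_Mapping.lookup p w) (wd w)) k"
    by simp
qed

lemma linear_op_eqI:
  assumes A: "linear_op A" and B: "linear_op B" and words: "\<And>w. A (wd w) = B (wd w)"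
  shows "A p = B p"
  by (subst (1 2) poly_expansion) (simp add: linear_op_sum[OF A] linear_op_sum[OF B]
      linear_op_smult[OF A] linear_op_smult[OF B] words)

text \<open>Linear extensions are linear; to prove this we may sum over any finite superset
  of the support.\<close>

lemma linext_superset:
  assumes "finite S" "Poly_Mapping.keys p \<subseteq> S"
  shows "linext f p = (\<Sum>w\<in>S. smult (Poly_Mapping.lookup p w) (f w))"
  unfolding linext_def using assms
  by (intro sum.mono_neutral_left) (auto simp: in_keys_iff)

lemma linear_op_linext: "linear_op (linext f)"
proof (rule linear_opI)
  fix p q :: ncpoly
  let ?S = "Poly_Mapping.keys p \<union> Poly_Mapping.keys q"
  have S: "finite ?S" "Poly_Mapping.keys (p + q) \<subseteq> ?S"
    by (simp_all add: keys_add)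
  show "linext f (p + q) = linext f p + linext f q"
    by (simp add: linext_superset[OF S] linext_superset[OF S(1), of p]
        linext_superset[OF S(1), of q] lookup_add smult_add_left sum.distrib)
next
  fix r and p :: ncpoly
  have "Poly_Mapping.keys (smult r p) \<subseteq> Poly_Mapping.keys p"
    by (auto simp: in_keys_iff)
  then have "linext f (smult r p)
      = (\<Sum>w\<in>Poly_Mapping.keys p. smult (Poly_Mapping.lookup (smult r p) w) (f w))"
    by (intro linext_superset) simp_all
  then show "linext f (smult r p) = smult r (linext f p)"
    by (simp add: smult_sum linext_def)
qed

lemma linext_wd [simp]: "linext f (wd w) = f w"
  by (simp add: linext_def wd_def)


section \<open>The concatenation product\<close>

abbreviation ncm (infixl "\<odot>" 70) where "p \<odot> q \<equiv> ncmult p q"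

lemma ncmult_superset:
  assumes "finite U" "finite V" "Poly_Mapping.keys p \<subseteq> U" "Poly_Mapping.keys q \<subseteq> V"
  shows "p \<odot> q = (\<Sum>u\<in>U. \<Sum>v\<in>V.
           Poly_Mapping.single (u @ v) (Poly_Mapping.lookup p u * Poly_Mapping.lookup q v))"
proof -
  have "p \<odot> q = (\<Sum>u\<in>Poly_Mapping.keys p. \<Sum>v\<in>V.
           Poly_Mapping.single (u @ v) (Poly_Mapping.lookup p u * Poly_Mapping.lookup q v))"
    unfolding ncmult_def using assms
    by (intro sum.cong[OF refl] sum.mono_neutral_left) (auto simp: in_keys_iff)
  also have "\<dots> = (\<Sum>u\<in>U. \<Sum>v\<in>V.
           Poly_Mapping.single (u @ v) (Poly_Mapping.lookup p u * Poly_Mapping.lookup q v))"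
    using assms by (intro sum.mono_neutral_left) (auto simp: in_keys_iff)
  finally show ?thesis .
qed

lemma linear_op_ncmult_left: "linear_op (\<lambda>p. p \<odot> q)"
proof (rule linear_opI)
  fix p p' :: ncpoly
  let ?U = "Poly_Mapping.keys p \<union> Poly_Mapping.keys p'" and ?V = "Poly_Mapping.keys q"
  have "Poly_Mapping.keys (p + p') \<subseteq> ?U" by (rule keys_add)
  then show "(p + p') \<odot> q = p \<odot> q + p' \<odot> q"
    by (simp add: ncmult_superset[of ?U ?V] lookup_add distrib_right single_add sum.distrib)
next
  fix r and p :: ncpoly
  have "Poly_Mapping.keys (smult r p) \<subseteq> Poly_Mapping.keys p" by (auto simp: in_keys_iff)
  then have "smult r p \<odot> q = (\<Sum>u\<in>Poly_Mapping.keys p. \<Sum>v\<in>Poly_Mapping.keys q.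
      Poly_Mapping.single (u @ v) (Poly_Mapping.lookup (smult r p) u * Poly_Mapping.lookup q v))"
    by (intro ncmult_superset) simp_all
  then show "smult r p \<odot> q = smult r (p \<odot> q)"
    by (simp add: smult_sum smult_single ncmult_def mult.assoc)
qed

lemma linear_op_ncmult_right: "linear_op (\<lambda>q. p \<odot> q)"
proof (rule linear_opI)
  fix q q' :: ncpoly
  let ?V = "Poly_Mapping.keys q \<union> Poly_Mapping.keys q'" and ?U = "Poly_Mapping.keys p"
  have "Poly_Mapping.keys (q + q') \<subseteq> ?V" by (rule keys_add)
  then show "p \<odot> (q + q') = p \<odot> q + p \<odot> q'"
    by (simp add: ncmult_superset[of ?U ?V] lookup_add distrib_left single_add sum.distrib)
next
  fix r and q :: ncpoly
  have "Poly_Mapping.keys (smult r q) \<subseteq> Poly_Mapping.keys q" by (auto simp: in_keys_iff)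
  then have "p \<odot> smult r q = (\<Sum>u\<in>Poly_Mapping.keys p. \<Sum>v\<in>Poly_Mapping.keys q.
      Poly_Mapping.single (u @ v) (Poly_Mapping.lookup p u * Poly_Mapping.lookup (smult r q) v))"
    by (intro ncmult_superset) simp_all
  then show "p \<odot> smult r q = smult r (p \<odot> q)"
    by (simp add: smult_sum smult_single ncmult_def mult.left_commute)
qed

lemma ncmult_wd [simp]: "wd u \<odot> wd v = wd (u @ v)"
  by (simp add: ncmult_def wd_def)

lemma ncmult_zero_left [simp]: "0 \<odot> q = 0"
  using linear_op_zero[OF linear_op_ncmult_left] .

lemma ncmult_zero_right [simp]: "p \<odot> 0 = 0"
  using linear_op_zero[OF linear_op_ncmult_right] .

lemmas ncmult_distribs =
  linear_op_add[OF linear_op_ncmult_left] linear_op_add[OF linear_op_ncmult_right]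
  linear_op_diff[OF linear_op_ncmult_left] linear_op_diff[OF linear_op_ncmult_right]
  linear_op_smult[OF linear_op_ncmult_left] linear_op_smult[OF linear_op_ncmult_right]
  linear_op_minus[OF linear_op_ncmult_left] linear_op_minus[OF linear_op_ncmult_right]

lemma bilinear_eqI:
  assumes "\<And>q. linear_op (\<lambda>p. F p q)" "\<And>q. linear_op (\<lambda>p. G p q)"
    "\<And>p. linear_op (\<lambda>q. F p q)" "\<And>p. linear_op (\<lambda>q. G p q)"
    "\<And>u v. F (wd u) (wd v) = G (wd u) (wd v)"
  shows "F p q = G p q"
proof -
  have "F (wd u) q = G (wd u) q" for u
    using assms(3-5) by (rule linear_op_eqI)
  then show ?thesis
    using assms(1,2) linear_op_eqI by blast
qed

lemma ncmult_one_left [simp]: "wd [] \<odot> p = p"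
  using linear_op_eqI[OF linear_op_ncmult_right linear_op_ident] by simp

lemma ncmult_one_right [simp]: "p \<odot> wd [] = p"
  using linear_op_eqI[OF linear_op_ncmult_left linear_op_ident] by simp

lemma ncmult_assoc: "(p \<odot> q) \<odot> r = p \<odot> (q \<odot> r)"
proof -
  have words: "(p \<odot> q) \<odot> wd w = p \<odot> (q \<odot> wd w)" for w
    by (rule bilinear_eqI[where F = "\<lambda>p q. (p \<odot> q) \<odot> wd w"],
        (intro linear_op_compose[OF linear_op_ncmult_left] linear_op_compose[OF linear_op_ncmult_right]
          linear_op_ncmult_left linear_op_ncmult_right)+) simp
  show ?thesis
    by (rule linear_op_eqI[where A = "\<lambda>r. (p \<odot> q) \<odot> r"])
      (simp_all add: words linear_op_compose linear_op_ncmult_right)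
qed


section \<open>The operators H, d1, theta and R_z\<close>

lemma linear_op_Hop: "linear_op Hop"
  unfolding Hop_def by (rule linear_op_linext)

lemma linear_op_d1: "linear_op d1"
  unfolding d1_def by (rule linear_op_linext)

lemma linear_op_theta: "linear_op (theta c)"
  unfolding theta_def by (rule linear_op_linext)

lemma linear_op_Rz: "linear_op Rz"
  unfolding Rz_def by (rule linear_op_ncmult_left)

lemmas linear_op_intros = linear_op_plus linear_op_minus_op linear_op_scale linear_op_ident
  linear_op_compose[OF linear_op_Hop] linear_op_compose[OF linear_op_d1]
  linear_op_compose[OF linear_op_theta] linear_op_compose[OF linear_op_Rz]
  linear_op_compose[OF linear_op_ncmult_left] linear_op_compose[OF linear_op_ncmult_right]

lemma Hop_wd: "Hop (wd w) = smult (of_nat (length w)) (wd w)"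
  by (simp add: Hop_def)

lemma d1_wd: "d1 (wd w) = d1_word w"
  by (simp add: d1_def)

lemma theta_wd: "theta c (wd w) = theta_word c w"
  by (simp add: theta_def)

lemma wd_Cons: "wd (a # u) = wd [a] \<odot> wd u"
  by simp

lemma Hop_mult: "Hop (p \<odot> q) = Hop p \<odot> q + p \<odot> Hop q"
  by (rule bilinear_eqI[where F = "\<lambda>p q. Hop (p \<odot> q)"], (intro linear_op_intros)+)
    (simp add: Hop_wd ncmult_distribs smult_add_left)

lemma d1_word_append: "d1_word (u @ v) = d1_word u \<odot> wd v + wd u \<odot> d1_word v"
proof (induction u)
  case Nil then show ?case by simp
next
  case (Cons a u)
  then have "d1_word ((a # u) @ v)
      = d1_letter a \<odot> (wd u \<odot> wd v) + wd [a] \<odot> (d1_word u \<odot> wd v + wd u \<odot> d1_word v)"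
    by simp
  also have "\<dots> = d1_word (a # u) \<odot> wd v + wd (a # u) \<odot> d1_word v"
    by (simp only: d1_word.simps ncmult_distribs ncmult_assoc wd_Cons[of a u] add_ac)
  finally show ?case .
qed

lemma d1_mult: "d1 (p \<odot> q) = d1 p \<odot> q + p \<odot> d1 q"
  by (rule bilinear_eqI[where F = "\<lambda>p q. d1 (p \<odot> q)"], (intro linear_op_intros)+)
    (simp add: d1_wd d1_word_append)

lemma theta_word_append:
  "theta_word c (u @ v)
     = theta_word c u \<odot> wd v + wd u \<odot> theta_word c v + smult c (d1_word u \<odot> Hop (wd v))"
proof (induction u)
  case Nil then show ?case by (simp add: Hop_wd)
next
  case (Cons a u)
  have "Hop (wd (u @ v)) = Hop (wd u) \<odot> wd v + wd u \<odot> Hop (wd v)"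
    using Hop_mult[of "wd u" "wd v"] by simp
  with Cons have "theta_word c ((a # u) @ v)
      = theta_letter a \<odot> (wd u \<odot> wd v)
        + wd [a] \<odot> (theta_word c u \<odot> wd v + wd u \<odot> theta_word c v
                     + smult c (d1_word u \<odot> Hop (wd v)))
        + smult c (d1_letter a \<odot> (Hop (wd u) \<odot> wd v + wd u \<odot> Hop (wd v)))"
    by simp
  also have "\<dots> = theta_word c (a # u) \<odot> wd v + wd (a # u) \<odot> theta_word c v
                   + smult c (d1_word (a # u) \<odot> Hop (wd v))"
    by (simp only: theta_word.simps d1_word.simps ncmult_distribs ncmult_assoc wd_Cons[of a u]
        add_ac smult_add)
  finally show ?case .
qed

lemma theta_mult: "theta c (p \<odot> q) = theta c p \<odot> q + p \<odot> theta c q + smult c (d1 p \<odot> Hop q)"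
  by (rule bilinear_eqI[where F = "\<lambda>p q. theta c (p \<odot> q)"], (intro linear_op_intros)+)
    (simp add: theta_wd d1_wd theta_word_append)


definition letter_sign :: "letter \<Rightarrow> rat" where
  "letter_sign a = (case a of X \<Rightarrow> 1 | Y \<Rightarrow> -1)"

lemma d1_letter_sign: "d1 (wd [a]) = smult (letter_sign a) (wd [X] \<odot> wd [Y])"
  by (cases a) (simp_all add: d1_wd letter_sign_def, rule poly_mapping_eqI, simp add: wd_def)

lemmas theta_lin = linear_op_add[OF linear_op_theta] linear_op_diff[OF linear_op_theta]
  linear_op_smult[OF linear_op_theta] linear_op_minus[OF linear_op_theta]
  linear_op_zero[OF linear_op_theta]
lemmas d1_lin = linear_op_add[OF linear_op_d1] linear_op_diff[OF linear_op_d1]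
  linear_op_smult[OF linear_op_d1] linear_op_minus[OF linear_op_d1]
  linear_op_zero[OF linear_op_d1]

lemma d1_zz: "d1 zz = 0"
  by (simp add: zz_def d1_lin d1_wd)

lemma Hop_zz: "Hop zz = zz"
  by (simp add: zz_def linear_op_add[OF linear_op_Hop] Hop_wd)

lemma theta_zz: "theta c zz = zz \<odot> zz"
proof -
  have "theta c zz = theta_letter X + theta_letter Y"
    by (simp add: zz_def theta_lin theta_wd Hop_wd)
  also have "\<dots> = smult (1/2) (zz \<odot> zz + zz \<odot> zz)"
    unfolding theta_letter_def smult_add[symmetric]
    by (simp add: zz_def ncmult_distribs add_ac)
  also have "\<dots> = zz \<odot> zz"
    by (rule poly_mapping_eqI) (simp add: lookup_add)
  finally show ?thesis .
qed

lemma theta_times_letter: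
  "theta c (p \<odot> wd [a])
     = theta c p \<odot> wd [a] + p \<odot> smult (1/2) (wd [a] \<odot> zz + zz \<odot> wd [a]) + smult c (d1 p \<odot> wd [a])"
  by (simp add: theta_mult theta_wd theta_letter_def Hop_wd)

lemma d1_times_letter:
  "d1 (p \<odot> wd [a]) = d1 p \<odot> wd [a] + smult (letter_sign a) (p \<odot> wd [X] \<odot> wd [Y])"
  by (simp add: d1_mult d1_letter_sign ncmult_distribs ncmult_assoc)

lemma theta_times_z: "theta c (p \<odot> zz) = theta c p \<odot> zz + p \<odot> zz \<odot> zz + smult c (d1 p \<odot> zz)"
  by (simp add: theta_mult theta_zz Hop_zz ncmult_assoc)

lemma d1_times_z: "d1 (p \<odot> zz) = d1 p \<odot> zz"
  by (simp add: d1_mult d1_zz)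


section \<open>The operators phi_n and the iterated commutators D_k\<close>

definition Dk :: "rat \<Rightarrow> nat \<Rightarrow> ncpoly \<Rightarrow> ncpoly" where
  "Dk c k = (ad (theta c) ^^ k) d1"

lemma Dk_0: "Dk c 0 = d1"
  by (simp add: Dk_def)

lemma Dk_Suc: "Dk c (Suc k) p = theta c (Dk c k p) - Dk c k (theta c p)"
  by (simp add: Dk_def ad_def comm_def)

lemma linear_op_Dk: "linear_op (Dk c k)"
  by (induction k) (simp_all add: Dk_def ad_def Dk_0 linear_op_d1 linear_op_comm linear_op_theta)

lemma linear_op_phi: "linear_op (phi c n)"
proof (induction n)
  case 0 then show ?case by (simp add: linear_op_ident id_def)
next
  case (Suc n)
  show ?case unfolding phi.simps comm_def
    by (intro linear_op_intros linear_op_compose[OF Suc] linear_op_compose[OF _ Suc]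
        linear_op_theta linear_op_Rz Suc)
qed

lemmas phi_lin = linear_op_add[OF linear_op_phi] linear_op_diff[OF linear_op_phi]
  linear_op_smult[OF linear_op_phi] linear_op_minus[OF linear_op_phi]
  linear_op_zero[OF linear_op_phi]
lemmas Dk_lin = linear_op_add[OF linear_op_Dk] linear_op_diff[OF linear_op_Dk]
  linear_op_smult[OF linear_op_Dk] linear_op_minus[OF linear_op_Dk]
  linear_op_zero[OF linear_op_Dk]

lemmas normalize_simps = theta_lin d1_lin phi_lin Dk_lin ncmult_distribs ncmult_assoc[symmetric]
  smult_add smult_diff smult_minus lookup_add lookup_minus

lemma phi_Suc_scaled:
  "smult (of_nat (Suc n)) (phi c (Suc n) p)
     = theta c (phi c n p) - phi c n (theta c p) + smult (1/2) (phi c n p \<odot> zz + phi c n (p \<odot> zz))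
       + smult c (d1 (phi c n p))"
  by (simp add: comm_def Rz_def)

lemma Dk_one: "Dk c k (wd []) = 0"
  by (induction k) (simp_all add: Dk_0 d1_wd Dk_Suc theta_wd theta_lin Dk_lin)

definition commutes :: "(ncpoly \<Rightarrow> ncpoly) \<Rightarrow> (ncpoly \<Rightarrow> ncpoly) \<Rightarrow> bool" where
  "commutes A B \<longleftrightarrow> (\<forall>p. A (B p) = B (A p))"

definition right_mult_rule :: "rat \<Rightarrow> nat \<Rightarrow> bool" where
  "right_mult_rule c k \<longleftrightarrow> (\<forall>p a. Dk c k (p \<odot> wd [a])
     = Dk c k p \<odot> wd [a] + smult (letter_sign a * fact k) (phi c k (p \<odot> wd [X]) \<odot> wd [Y]))"

lemma right_mult_rule_0: "right_mult_rule c 0"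
  by (simp add: right_mult_rule_def Dk_0 d1_times_letter ncmult_assoc)

text \<open>Since sgn(x) + sgn(y) = 0, the right-multiplication rule makes D_k commute with R_z.\<close>
lemma Dk_commutes_Rz:
  assumes "right_mult_rule c k" shows "Dk c k (p \<odot> zz) = Dk c k p \<odot> zz"
  using assms by (simp add: right_mult_rule_def zz_def ncmult_distribs Dk_lin letter_sign_def
      smult_add_left[symmetric])

text \<open>The rule propagates from D_k to D_(k+1) = [theta, D_k], provided D_k commutes with d1;
  the correction term reproduces the recursion defining phi_(k+1).\<close>
lemma right_mult_rule_Suc:
  assumes rule: "right_mult_rule c k" and d1_comm: "commutes d1 (Dk c k)"
  shows "right_mult_rule c (Suc k)"
  unfolding right_mult_rule_def
proof (intro allI)
  fix p a
  have rule': "Dk c k (q \<odot> wd [b])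
      = Dk c k q \<odot> wd [b] + smult (letter_sign b * fact k) (phi c k (q \<odot> wd [X]) \<odot> wd [Y])" for q b
    using rule by (simp add: right_mult_rule_def)
  have fact_Suc: "smult (letter_sign a * fact (Suc k)) (phi c (Suc k) (p \<odot> wd [X]) \<odot> wd [Y])
      = smult (letter_sign a * fact k) (smult (of_nat (Suc k)) (phi c (Suc k) (p \<odot> wd [X])) \<odot> wd [Y])"
    by (simp add: ncmult_distribs mult_ac)
  show "Dk c (Suc k) (p \<odot> wd [a]) = Dk c (Suc k) p \<odot> wd [a]
      + smult (letter_sign a * fact (Suc k)) (phi c (Suc k) (p \<odot> wd [X]) \<odot> wd [Y])"
    unfolding fact_Suc phi_Suc_scaled
    using d1_comm Dk_commutes_Rz[OF rule]
    by (intro poly_mapping_eqI) (simp add: commutes_def Dk_Suc rule' theta_times_letter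
        d1_times_letter normalize_simps)
qed

lemma phi_Suc_commutes_Rz:
  assumes "\<And>p. phi c n (p \<odot> zz) = phi c n p \<odot> zz" and "commutes (Dk c 0) (phi c n)"
  shows "phi c (Suc n) (p \<odot> zz) = phi c (Suc n) p \<odot> zz"
  using assms
  by (intro poly_mapping_eqI) (simp add: comm_def Rz_def commutes_def Dk_0 theta_times_z d1_times_z
      normalize_simps)

text \<open>D_j commutes with phi_(n+1) once D_j and D_(j+1) commute with phi_n (the commutator
  with theta turns D_j theta into theta D_j - D_(j+1)), D_j commutes with d1 and with R_z.\<close>
lemma Dk_commutes_phi_Suc:
  assumes "commutes (Dk c j) (phi c n)" "commutes (Dk c (Suc j)) (phi c n)"
    and "commutes d1 (Dk c j)" and "right_mult_rule c j"
  shows "commutes (Dk c j) (phi c (Suc n))"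
proof -
  have "Dk c j (d1 q) = d1 (Dk c j q)" "Dk c (Suc j) (phi c n q) = phi c n (Dk c (Suc j) q)"
    and Dk_theta: "Dk c j (theta c q) = theta c (Dk c j q) - Dk c (Suc j) q" for q
    using assms(2,3) by (simp_all add: commutes_def Dk_Suc)
  then show ?thesis
    using assms(1) Dk_commutes_Rz[OF assms(4)] unfolding commutes_def
    by (intro allI poly_mapping_eqI) (simp add: comm_def Rz_def normalize_simps)
qed

text \<open>D_k commutes with d1: on words, by induction on the last letter, using the
  right-multiplication rules of D_k and d1; phi_k(r y) is rewritten through phi_k(r z).\<close>
lemma d1_commutes_Dk:
  assumes rule: "right_mult_rule c k" and "commutes (Dk c 0) (phi c k)"
    and phi_z: "\<And>p. phi c k (p \<odot> zz) = phi c k p \<odot> zz"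
  shows "commutes d1 (Dk c k)"
proof -
  have phi_Y: "phi c k (r \<odot> wd [Y]) = phi c k r \<odot> wd [X] + phi c k r \<odot> wd [Y] - phi c k (r \<odot> wd [X])"
    for r
    using phi_z[of r] by (simp add: zz_def ncmult_distribs phi_lin algebra_simps)
  have "d1 (Dk c k (wd w)) = Dk c k (d1 (wd w))" for w
  proof (induction w rule: rev_induct)
    case Nil then show ?case by (simp add: Dk_one d1_wd d1_lin Dk_lin)
  next
    case (snoc a w)
    have "wd (w @ [a]) = wd w \<odot> wd [a]" by simp
    then show ?case
      using rule assms(2) snoc
      by (simp only:, intro poly_mapping_eqI)
        (simp add: right_mult_rule_def commutes_def Dk_0 phi_Y d1_times_letter letter_sign_def
          normalize_simps del: ncmult_wd)
  qed
  then show ?thesis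
    unfolding commutes_def
    using linear_op_eqI[OF linear_op_compose[OF linear_op_d1 linear_op_Dk]
        linear_op_compose[OF linear_op_Dk linear_op_d1]] by blast
qed


section \<open>The simultaneous induction\<close>

definition level_ok :: "rat \<Rightarrow> nat \<Rightarrow> bool" where
  "level_ok c N \<longleftrightarrow> right_mult_rule c N \<and> (\<forall>p. phi c N (p \<odot> zz) = phi c N p \<odot> zz)
     \<and> (\<forall>j m. j + m = N \<longrightarrow> commutes (Dk c j) (phi c m)) \<and> commutes d1 (Dk c N)"

lemma level_ok_all: "level_ok c N"
proof (induction N rule: less_induct)
  case (less N)
  have lower: "level_ok c k" if "k < N" for k
    using less that .
  have rule: "right_mult_rule c N"
  proof (cases N)
    case 0 then show ?thesis by (simp add: right_mult_rule_0)
  next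
    case (Suc k)
    with lower[of k] show ?thesis by (simp add: level_ok_def right_mult_rule_Suc)
  qed
  have phi_z: "phi c N (p \<odot> zz) = phi c N p \<odot> zz" for p
  proof (cases N)
    case 0 then show ?thesis by simp
  next
    case (Suc m)
    with lower[of m] have "phi c m (q \<odot> zz) = phi c m q \<odot> zz" "commutes (Dk c 0) (phi c m)" for q
      by (simp_all add: level_ok_def)
    then show ?thesis
      unfolding Suc by (rule phi_Suc_commutes_Rz)
  qed
  have comm: "commutes (Dk c j) (phi c m)" if "j + m = N" for j m
    using that
  proof (induction m arbitrary: j)
    case 0 then show ?case by (simp add: commutes_def)
  next
    case (Suc m)
    then have "j < N" "j + m < N" by simp_all
    with Suc lower show ?case
      unfolding level_ok_def by (intro Dk_commutes_phi_Suc) auto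
  qed
  have "commutes d1 (Dk c N)"
    using rule comm[of 0 N] phi_z by (intro d1_commutes_Dk) auto
  with rule phi_z comm show ?case
    by (simp add: level_ok_def)
qed

corollary phi_commutes_Rz: "phi c n (p \<odot> zz) = phi c n p \<odot> zz"
  using level_ok_all[of c n] by (simp add: level_ok_def)


text \<open>One step of the recursion: given phi_n R_z = R_z phi_n, the commutator of theta
  with R_z phi_n equals (n+1) R_z phi_(n+1).\<close>
lemma ad_theta_Rz_phi:
  "theta c (Rz (phi c n p)) - Rz (phi c n (theta c p)) = smult (of_nat (Suc n)) (Rz (phi c (Suc n) p))"
  unfolding Rz_def ncmult_distribs(5)[symmetric] phi_Suc_scaled
  by (intro poly_mapping_eqI) (simp add: phi_commutes_Rz theta_times_z normalize_simps)

lemma ad_theta_power_Rz: "((ad (theta c)) ^^ n) Rz = (\<lambda>p. smult (fact n) (Rz (phi c n p)))"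
proof (induction n)
  case 0 show ?case by (simp add: fun_eq_iff poly_mapping_eqI)
next
  case (Suc n)
  have "((ad (theta c)) ^^ Suc n) Rz p = ad (theta c) (((ad (theta c)) ^^ n) Rz) p" for p
    by simp
  also have "\<dots> p = smult (fact n) (theta c (Rz (phi c n p)) - Rz (phi c n (theta c p)))" for p
    unfolding Suc by (simp add: ad_def comm_def theta_lin smult_diff)
  then show ?case
    by (simp add: fun_eq_iff ad_theta_Rz_phi mult.commute)
qed

theorem mainTheorem8:
  fixes n :: nat and c :: rat
  shows "Rz \<circ> phi c n = (\<lambda>p. smult (1 / fact n) (((ad (theta c)) ^^ n) Rz p))"
  by (simp add: fun_eq_iff ad_theta_power_Rz poly_mapping_eqI)

end
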